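(* For every integer $n\ge 0$, $$\Phi^{(1)}[aq^n; b, b'; c; x, y] = \sum_{k=0}^n \sum_{i=0}^k \begin{bmatrix} n \\ k \end{bmatrix} \begin{bmatrix} k \\ i \end{bmatrix} \frac{(b; q)_{k-i} (b'; q)_i}{(c; q)_k} q^{2\binom{k}{2}} a^k x^{k-i} y^i\, \Phi^{(1)}[aq^k; bq^{k-i}, b'q^i; cq^k; xq^i, y]$$ and $$\Phi^{(1)}[aq^{-n}; b, b'; c; x, y] = \sum_{k=0}^n \sum_{i=0}^k \begin{bmatrix} n \\ k \end{bmatrix} \begin{bmatrix} k \\ i \end{bmatrix} \frac{(b; q)_{k-i} (b'; q)_i}{(c; q)_k} q^{\binom{k}{2} - nk} (-a)^k x^{k-i} y^i\, \Phi^{(1)}[a; bq^{k-i}, b'q^i; cq^k; xq^i, y].$$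
   Context: Let $q$ be a complex number with $0<|q|<1$. For complex $z$ and integer $m\ge 0$, $(z;q)_m=\prod_{j=0}^{m-1}(1-zq^j)$, with $(z;q)_0=1$. For integers $0\le k\le n$, $\begin{bmatrix} n \\ k \end{bmatrix}=\frac{(q;q)_n}{(q;q)_k(q;q)_{n-k}}$ is the $q$-binomial coefficient. The $q$-Appell function $\Phi^{(1)}$ is $$\Phi^{(1)}[a; b, b'; c; x, y] = \sum_{m, n \geq 0} \frac{(a; q)_{m+n} (b; q)_m (b'; q)_n}{(q; q)_m (q; q)_n (c; q)_{m+n}} x^m y^n.$$ Identities are understood as identities of power series in $x,y$ (formal, or convergent for small $|x|,|y|$), with complex parameters chosen so that no denominator occurring vanishes. *)

theory Defs
  imports "HOL-Analysis.Analysis"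
begin

definition qpoch :: "complex \<Rightarrow> complex \<Rightarrow> nat \<Rightarrow> complex" where
  "qpoch z q m = (\<Prod>j<m. (1 - z * q ^ j))"

definition qbinom :: "complex \<Rightarrow> nat \<Rightarrow> nat \<Rightarrow> complex" where
  "qbinom q n k = qpoch q q n / (qpoch q q k * qpoch q q (n - k))"

definition qAppell1 ::
  "complex \<Rightarrow> complex \<Rightarrow> complex \<Rightarrow> complex \<Rightarrow> complex \<Rightarrow> complex \<Rightarrow> complex \<Rightarrow> complex" where
  "qAppell1 q a b b' c x y =
     (\<Sum>\<^sub>\<infinity>(m, n) \<in> (UNIV :: (nat \<times> nat) set).
        qpoch a q (m + n) * qpoch b q m * qpoch b' q n
        / (qpoch q q m * qpoch q q n * qpoch c q (m + n)) * x ^ m * y ^ n)"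

end

theory Submission
  imports Defs "HOL-Library.Function_Algebras"
begin

text \<open>Let \<open>Z\<close> act on double sequences by \<open>(Z f)(i, j) = q\<^sup>j f(i+1, j) + f(i, j+1)\<close> and put
  \<open>S\<^sub>\<alpha>(i, j) = (b;q)\<^sub>i (b';q)\<^sub>j / (c;q)\<^sub>i\<^sub>+\<^sub>j x\<^sup>i y\<^sup>j \<Phi>[\<alpha>; bq\<^sup>i, b'q\<^sup>j; cq\<^sup>i\<^sup>+\<^sup>j; xq\<^sup>j, y]\<close>.
  The contiguous relation of \<open>\<Phi>\<close> in its first parameter, applied to every \<open>S\<^sub>\<alpha>(i, j)\<close>, says
  \<open>S\<^sub>\<alpha>\<^sub>q = S\<^sub>\<alpha> + \<alpha> Z S\<^sub>\<alpha>\<^sub>q\<close>. Along \<open>\<alpha> = a q\<^sup>k\<close> this is a linear recurrence with geometric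
  coefficients; unrolled upwards it expresses \<open>S\<^bsub>aq\<^sup>n\<^esub>\<close> through the \<open>Z\<^sup>k S\<^bsub>aq\<^sup>k\<^esub>\<close>, unrolled
  downwards from \<open>aq\<^sup>-\<^sup>n\<close> it expresses \<open>S\<^bsub>aq\<^sup>-\<^sup>n\<^esub>\<close> through the \<open>Z\<^sup>k S\<^sub>a\<close>, in both cases with
  Gaussian binomial coefficients. As \<open>Z\<close> is a sum of two q-commuting shifts, \<open>Z\<^sup>k\<close> is again a
  Gaussian binomial sum of shifts, and evaluation at \<open>(0, 0)\<close> gives the double sums. All series
  converge absolutely for small \<open>x, y\<close>, uniformly in the parameters, which only shrink under the
  shifts.\<close>

section \<open>q-shifted factorials and Gaussian binomials\<close>

lemma qpoch_0 [simp]: "qpoch z q 0 = 1"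
  by (simp add: qpoch_def)

lemma qpoch_Suc: "qpoch z q (Suc m) = qpoch z q m * (1 - z * q ^ m)"
  by (simp add: qpoch_def)

lemma qpoch_Suc_shift: "qpoch z q (Suc m) = (1 - z) * qpoch (z * q) q m"
  unfolding qpoch_def by (subst prod.lessThan_Suc_shift) (simp add: mult.assoc)

lemma qpoch_nonzero: "(\<And>j. z * q ^ j \<noteq> 1) \<Longrightarrow> qpoch z q m \<noteq> 0"
  by (auto simp: qpoch_def)

lemma qpoch_q_nonzero: "(\<And>j. q ^ Suc j \<noteq> 1) \<Longrightarrow> qpoch q q m \<noteq> 0"
  by (rule qpoch_nonzero) simp

lemma power_Suc_neq_one:
  fixes q :: complex
  assumes "norm q < 1"
  shows "q ^ Suc j \<noteq> 1"
proof
  assume "q ^ Suc j = 1"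
  then have "norm q ^ Suc j = 1" by (metis norm_one norm_power)
  moreover have "norm q ^ Suc j < 1"
    using assms by (simp del: power_Suc add: power_less_one_iff)
  ultimately show False by simp
qed

text \<open>For \<open>k > n\<close>, truncated subtraction makes \<open>qbinom q n k = (q;q)\<^sub>n / (q;q)\<^sub>k\<close> rather than 0;
  the Pascal rules need the extension by zero.\<close>
definition qbinomial :: "complex \<Rightarrow> nat \<Rightarrow> nat \<Rightarrow> complex" where
  "qbinomial q n k = (if k \<le> n then qbinom q n k else 0)"

lemma qbinomial_eq_0 [simp]: "n < k \<Longrightarrow> qbinomial q n k = 0"
  by (simp add: qbinomial_def)

lemma qbinomial_0_right:
  "(\<And>j. q ^ Suc j \<noteq> 1) \<Longrightarrow> qbinomial q n 0 = 1"
  by (simp add: qbinomial_def qbinom_def qpoch_q_nonzero)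

lemma qbinomial_self:
  "(\<And>j. q ^ Suc j \<noteq> 1) \<Longrightarrow> qbinomial q n n = 1"
  by (simp add: qbinomial_def qbinom_def qpoch_q_nonzero)

lemma qbinom_pascal:
  assumes q: "\<And>j. q ^ Suc j \<noteq> 1" and "k < n"
  shows "qbinom q (Suc n) (Suc k) = qbinom q n (Suc k) + q ^ (n - k) * qbinom q n k"
    and "qbinom q (Suc n) (Suc k) = q ^ Suc k * qbinom q n (Suc k) + qbinom q n k"
proof -
  obtain d where n: "n = Suc (k + d)"
    using \<open>k < n\<close> less_iff_Suc_add by auto
  define P where "P = qpoch q q"
  define u where "u = q ^ Suc k"
  define v where "v = q ^ Suc d"
  define U where "U = 1 - u"
  define V where "V = 1 - v"
  have nz: "P k \<noteq> 0" "P d \<noteq> 0" "U \<noteq> 0" "V \<noteq> 0"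
    using q[of k] q[of d] qpoch_q_nonzero[OF q] by (auto simp: P_def u_def v_def U_def V_def)
  have P_Suc: "qpoch q q (Suc n) = P n * (1 - u * v)" "qpoch q q (Suc k) = P k * U"
    "qpoch q q (Suc d) = P d * V"
    by (simp_all add: qpoch_Suc P_def u_def v_def U_def V_def n flip: power_add)
  have top: "qbinom q (Suc n) (Suc k) = P n * (1 - u * v) / (P k * U * (P d * V))"
    using P_Suc by (simp add: qbinom_def n P_def)
  have left: "qbinom q n (Suc k) = P n / (P k * U * P d)"
    using P_Suc by (simp add: qbinom_def n P_def)
  have right: "qbinom q n k = P n / (P k * (P d * V))"
    using P_Suc by (simp add: qbinom_def n P_def)
  have pascal1: "q ^ (n - k) = v" "1 - u * v = V + v * U"
    by (simp_all add: n v_def U_def V_def algebra_simps)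
  show "qbinom q (Suc n) (Suc k) = qbinom q n (Suc k) + q ^ (n - k) * qbinom q n k"
    unfolding top left right pascal1 using nz by (simp add: field_simps)
  have pascal2: "1 - u * v = u * V + U"
    by (simp add: U_def V_def algebra_simps)
  show "qbinom q (Suc n) (Suc k) = q ^ Suc k * qbinom q n (Suc k) + qbinom q n k"
    unfolding top left right pascal2 u_def[symmetric] using nz by (simp add: field_simps)
qed

lemma qbinomial_Suc_Suc:
  assumes "\<And>j. q ^ Suc j \<noteq> 1"
  shows "qbinomial q (Suc n) (Suc k) = qbinomial q n (Suc k) + q ^ (n - k) * qbinomial q n k"
  using qbinom_pascal(1)[OF assms] qbinomial_self[OF assms]
  by (cases k n rule: linorder_cases) (auto simp: qbinomial_def)

lemma qbinomial_Suc_Suc':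
  assumes "\<And>j. q ^ Suc j \<noteq> 1"
  shows "qbinomial q (Suc n) (Suc k) = q ^ Suc k * qbinomial q n (Suc k) + qbinomial q n k"
  using qbinom_pascal(2)[OF assms] qbinomial_self[OF assms]
  by (cases k n rule: linorder_cases) (auto simp: qbinomial_def)

section \<open>Recurrences with geometric coefficients\<close>

lemma choose_two_Suc: "Suc l choose 2 = (l choose 2) + l"
  by (simp add: numeral_2_eq_2)

lemma power_choose_two_Suc:
  fixes a q :: complex
  assumes "l \<le> n"
  shows "a * q ^ n * (q ^ (2 * (l choose 2)) * (a * q) ^ l) = q ^ (n - l) * (q ^ (2 * (Suc l choose 2)) * a ^ Suc l)"
proof -
  have "q ^ n = q ^ (n - l) * q ^ l" "2 * (Suc l choose 2) = 2 * (l choose 2) + l + l"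
    using assms by (simp_all add: choose_two_Suc flip: power_add)
  then show ?thesis
    by (simp only: power_add power_Suc power_mult_distrib mult_ac)
qed

lemma qrecurrence_expand_last:
  fixes T :: "'v::ab_group_add \<Rightarrow> 'v" and s :: "complex \<Rightarrow> 'v \<Rightarrow> 'v"
  assumes T: "module_hom s s T" and q: "\<And>j. q ^ Suc j \<noteq> 1"
    and rec: "\<And>k. R (Suc k) = R k + s (a * q ^ k) (T (R (Suc k)))"
  shows "R n = (\<Sum>l\<le>n. s (qbinomial q n l * q ^ (2 * (l choose 2)) * a ^ l) ((T ^^ l) (R l)))"
  using rec
proof (induction n arbitrary: a R)
  case 0
  interpret module_hom s s T by (fact T)
  show ?case by (simp add: qbinomial_0_right[OF q] binomial_eq_0)
next
  case (Suc n)
  interpret module_hom s s T by (fact T)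
  define c where "c l = q ^ (2 * (l choose 2)) * a ^ l" for l
  define W where "W l = (T ^^ l) (R l)" for l
  have rec_shifted: "R (Suc (Suc k)) = R (Suc k) + s (a * q * q ^ k) (T (R (Suc (Suc k))))" for k
    using Suc.prems[of "Suc k"] by (simp add: mult.assoc)
  have "R (Suc n) = (\<Sum>l\<le>n. s (qbinomial q n l * q ^ (2 * (l choose 2)) * (a * q) ^ l) ((T ^^ l) (R (Suc l))))"
    using Suc.IH[of "\<lambda>k. R (Suc k)" "a * q"] rec_shifted by simp
  then have "s (a * q ^ n) (T (R (Suc n)))
      = (\<Sum>l\<le>n. s (a * q ^ n * (qbinomial q n l * q ^ (2 * (l choose 2)) * (a * q) ^ l)) (W (Suc l)))"
    by (simp add: sum scale m1.scale_sum_right W_def)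
  also have "\<dots> = (\<Sum>l\<le>n. s (q ^ (n - l) * qbinomial q n l * c (Suc l)) (W (Suc l)))"
  proof (intro sum.cong refl arg_cong2[where f = s])
    fix l assume "l \<in> {..n}"
    then have "l \<le> n" by simp
    from power_choose_two_Suc[OF this, of a q]
    show "a * q ^ n * (qbinomial q n l * q ^ (2 * (l choose 2)) * (a * q) ^ l) = q ^ (n - l) * qbinomial q n l * c (Suc l)"
      unfolding c_def by (simp only: mult_ac)
  qed
  finally have step: "s (a * q ^ n) (T (R (Suc n))) = \<dots>" .
  have "R n = (\<Sum>l\<le>Suc n. s (qbinomial q n l * c l) (W l))"
    using Suc.IH[OF Suc.prems] by (simp add: c_def W_def mult.assoc)
  also have "\<dots> = W 0 + (\<Sum>l\<le>n. s (qbinomial q n (Suc l) * c (Suc l)) (W (Suc l)))"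
    unfolding sum.atMost_Suc_shift by (simp add: c_def qbinomial_0_right[OF q] binomial_eq_0)
  finally have "R (Suc n) = W 0 + (\<Sum>l\<le>n. s (qbinomial q n (Suc l) * c (Suc l)) (W (Suc l)))
      + (\<Sum>l\<le>n. s (q ^ (n - l) * qbinomial q n l * c (Suc l)) (W (Suc l)))"
    using Suc.prems[of n] step by simp
  also have "\<dots> = W 0 + (\<Sum>l\<le>n. s (qbinomial q (Suc n) (Suc l) * c (Suc l)) (W (Suc l)))"
    by (simp add: qbinomial_Suc_Suc[OF q] sum.distrib m1.scale_left_distrib distrib_right add.assoc)
  also have "\<dots> = (\<Sum>l\<le>Suc n. s (qbinomial q (Suc n) l * c l) (W l))"
    unfolding sum.atMost_Suc_shift by (simp add: c_def qbinomial_0_right[OF q] binomial_eq_0)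
  finally show ?case by (simp add: c_def W_def mult.assoc)
qed

text \<open>The hypothesis says \<open>R\<^sub>k = (1 - a q\<^sup>k T) R\<^sub>k\<^sub>+\<^sub>1\<close>, so \<open>R\<^sub>0 = (\<Prod>k<n. 1 - a q\<^sup>k T) R\<^sub>n\<close>,
  which the q-binomial theorem expands in powers of \<open>T\<close>.\<close>

lemma qrecurrence_expand_first:
  fixes T :: "'v::ab_group_add \<Rightarrow> 'v" and s :: "complex \<Rightarrow> 'v \<Rightarrow> 'v"
  assumes T: "module_hom s s T" and q: "\<And>j. q ^ Suc j \<noteq> 1"
    and rec: "\<And>k. R (Suc k) = R k + s (a * q ^ k) (T (R (Suc k)))"
  shows "R 0 = (\<Sum>l\<le>n. s (qbinomial q n l * q ^ (l choose 2) * (- a) ^ l) ((T ^^ l) (R n)))"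
  using rec
proof (induction n arbitrary: a R)
  case 0
  interpret module_hom s s T by (fact T)
  show ?case by (simp add: qbinomial_0_right[OF q] binomial_eq_0)
next
  case (Suc n)
  interpret module_hom s s T by (fact T)
  define X where "X l = q ^ (l choose 2) * (- a) ^ l" for l
  define W where "W l = (T ^^ l) (R (Suc n))" for l
  have rec_shifted: "R (Suc (Suc k)) = R (Suc k) + s (a * q * q ^ k) (T (R (Suc (Suc k))))" for k
    using Suc.prems[of "Suc k"] by (simp add: mult.assoc)
  have minus_power: "(- (a * q)) ^ l = (- a) ^ l * q ^ l" for l
    by (metis mult_minus_left power_mult_distrib)
  have "R (Suc 0) = (\<Sum>l\<le>n. s (qbinomial q n l * q ^ (l choose 2) * (- (a * q)) ^ l) (W l))"
    using Suc.IH[of "\<lambda>k. R (Suc k)" "a * q"] rec_shifted by (simp add: W_def)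
  then have R1: "R (Suc 0) = (\<Sum>l\<le>Suc n. s (q ^ l * qbinomial q n l * X l) (W l))"
    by (simp add: X_def minus_power mult_ac)
  have "R (Suc 0) = R 0 + s a (T (R (Suc 0)))"
    using Suc.prems[of 0] by simp
  then have R0: "R 0 = R (Suc 0) + s (- a) (T (R (Suc 0)))"
    by (metis eq_diff_eq diff_conv_add_uminus m1.scale_minus_left)
  have R1_shifted: "R (Suc 0) = W 0 + (\<Sum>l\<le>n. s (q ^ Suc l * qbinomial q n (Suc l) * X (Suc l)) (W (Suc l)))"
    unfolding R1 sum.atMost_Suc_shift by (simp add: X_def qbinomial_0_right[OF q] binomial_eq_0)
  have T_R1: "s (- a) (T (R (Suc 0))) = (\<Sum>l\<le>n. s (qbinomial q n l * X (Suc l)) (W (Suc l)))"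
  proof -
    have "s (- a) (T (R (Suc 0))) = (\<Sum>l\<le>n. s (- a * (q ^ l * qbinomial q n l * X l)) (W (Suc l)))"
      unfolding R1 by (simp add: sum scale m1.scale_sum_right W_def)
    also have "\<dots> = (\<Sum>l\<le>n. s (qbinomial q n l * X (Suc l)) (W (Suc l)))"
      by (simp add: X_def choose_two_Suc power_add mult_ac)
    finally show ?thesis .
  qed
  have "R 0 = W 0 + (\<Sum>l\<le>n. s (q ^ Suc l * qbinomial q n (Suc l) * X (Suc l)) (W (Suc l)))
      + (\<Sum>l\<le>n. s (qbinomial q n l * X (Suc l)) (W (Suc l)))"
    using R0 unfolding T_R1 unfolding R1_shifted .
  also have "\<dots> = W 0 + (\<Sum>l\<le>n. s (qbinomial q (Suc n) (Suc l) * X (Suc l)) (W (Suc l)))"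
    by (simp add: qbinomial_Suc_Suc'[OF q] sum.distrib m1.scale_left_distrib distrib_right add.assoc)
  also have "\<dots> = (\<Sum>l\<le>Suc n. s (qbinomial q (Suc n) l * X l) (W l))"
    unfolding sum.atMost_Suc_shift by (simp add: X_def qbinomial_0_right[OF q] binomial_eq_0)
  finally show ?case by (simp add: X_def W_def mult.assoc)
qed

section \<open>The shift operator\<close>

definition scale_fun :: "complex \<Rightarrow> (nat \<Rightarrow> nat \<Rightarrow> complex) \<Rightarrow> nat \<Rightarrow> nat \<Rightarrow> complex" where
  "scale_fun c f i j = c * f i j"

definition qshift :: "complex \<Rightarrow> (nat \<Rightarrow> nat \<Rightarrow> complex) \<Rightarrow> nat \<Rightarrow> nat \<Rightarrow> complex" where
  "qshift q f i j = q ^ j * f (Suc i) j + f i (Suc j)"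

lemma module_scale_fun: "module scale_fun"
  by unfold_locales (simp_all add: scale_fun_def fun_eq_iff algebra_simps)

lemma module_hom_qshift: "module_hom scale_fun scale_fun (qshift q)"
  using module_scale_fun
  by (simp add: module_hom_iff qshift_def scale_fun_def fun_eq_iff algebra_simps)

lemma sum_fun_apply: "(\<Sum>a\<in>A. f a) x = (\<Sum>a\<in>A. f a x)"
  by (induction A rule: infinite_finite_induct) simp_all

text \<open>\<^const>\<open>qshift\<close> is the sum of the shifts \<open>f \<mapsto> (\<lambda>i j. q\<^sup>j f (i+1) j)\<close> and
  \<open>f \<mapsto> (\<lambda>i j. f i (j+1))\<close>, which q-commute; hence its powers expand with Gaussian binomials.\<close>

lemma qshift_funpow:
  assumes q: "\<And>j. q ^ Suc j \<noteq> 1"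
  shows "(qshift q ^^ k) f i j = (\<Sum>l\<le>k. qbinomial q k l * q ^ (j * (k - l)) * f (i + (k - l)) (j + l))"
proof (induction k arbitrary: i j)
  case 0
  then show ?case by (simp add: qbinomial_0_right[OF q])
next
  case (Suc k)
  define F where "F l = f (i + (k - l)) (j + Suc l)" for l
  have "q ^ j * (qshift q ^^ k) f (Suc i) j
      = (\<Sum>l\<le>k. qbinomial q k l * q ^ (j * (Suc k - l)) * f (i + (Suc k - l)) (j + l))"
    unfolding Suc.IH sum_distrib_left
  proof (intro sum.cong refl)
    fix l assume "l \<in> {..k}"
    then have index: "Suc i + (k - l) = i + (Suc k - l)"
      and power: "q ^ j * q ^ (j * (k - l)) = q ^ (j * (Suc k - l))"
      by (simp_all add: Suc_diff_le flip: power_add)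
    show "q ^ j * (qbinomial q k l * q ^ (j * (k - l)) * f (Suc i + (k - l)) (j + l))
        = qbinomial q k l * q ^ (j * (Suc k - l)) * f (i + (Suc k - l)) (j + l)"
      unfolding index power[symmetric] by (simp only: mult_ac)
  qed
  also have "\<dots> = (\<Sum>l\<le>Suc k. qbinomial q k l * q ^ (j * (Suc k - l)) * f (i + (Suc k - l)) (j + l))"
    by simp
  also have "\<dots> = q ^ (j * Suc k) * f (i + Suc k) j + (\<Sum>l\<le>k. qbinomial q k (Suc l) * q ^ (j * (k - l)) * F l)"
    unfolding sum.atMost_Suc_shift by (simp add: F_def qbinomial_0_right[OF q])
  finally have first: "q ^ j * (qshift q ^^ k) f (Suc i) j = \<dots>" .
  have second: "(qshift q ^^ k) f i (Suc j) = (\<Sum>l\<le>k. q ^ (k - l) * qbinomial q k l * q ^ (j * (k - l)) * F l)"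
    unfolding Suc.IH F_def by (simp only: mult_Suc power_add add_Suc add_Suc_right mult_ac)
  have "(qshift q ^^ Suc k) f i j = q ^ (j * Suc k) * f (i + Suc k) j
      + (\<Sum>l\<le>k. qbinomial q (Suc k) (Suc l) * q ^ (j * (k - l)) * F l)"
    by (simp add: qshift_def first second qbinomial_Suc_Suc[OF q] sum.distrib distrib_right add.assoc)
  also have "\<dots> = (\<Sum>l\<le>Suc k. qbinomial q (Suc k) l * q ^ (j * (Suc k - l)) * f (i + (Suc k - l)) (j + l))"
    unfolding sum.atMost_Suc_shift by (simp add: F_def qbinomial_0_right[OF q])
  finally show ?case .
qed

section \<open>Absolute convergence\<close>

definition qAppell1_term ::
  "complex \<Rightarrow> complex \<Rightarrow> complex \<Rightarrow> complex \<Rightarrow> complex \<Rightarrow> complex \<Rightarrow> complex \<Rightarrow> nat \<times> nat \<Rightarrow> complex"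
where
  "qAppell1_term q a b b' c x y = (\<lambda>(m, n). qpoch a q (m + n) * qpoch b q m * qpoch b' q n
     / (qpoch q q m * qpoch q q n * qpoch c q (m + n)) * x ^ m * y ^ n)"

lemma qAppell1_eq_infsum: "qAppell1 q a b b' c x y = infsum (qAppell1_term q a b b' c x y) UNIV"
  by (simp add: qAppell1_def qAppell1_term_def)

lemma norm_mult_power_le:
  fixes q z :: complex
  assumes "norm q \<le> 1"
  shows "norm (z * q ^ j) \<le> norm z"
proof -
  have "norm q ^ j \<le> 1"
    using assms by (simp add: power_le_one)
  then show ?thesis
    by (simp add: norm_mult norm_power mult_left_le)
qed

lemma norm_one_minus_mult_power_ge:
  fixes q z :: complex
  assumes "norm q \<le> 1"
  shows "1 - norm z \<le> norm (1 - z * q ^ j)"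
  using norm_mult_power_le[OF assms, of z j] norm_triangle_ineq2[of 1 "z * q ^ j"] by simp

lemma norm_qpoch_le:
  assumes "norm q \<le> 1"
  shows "norm (qpoch z q m) \<le> (1 + norm z) ^ m"
proof -
  have "norm (qpoch z q m) \<le> (\<Prod>j<m. norm (1 - z * q ^ j))"
    unfolding qpoch_def by (rule norm_prod_le)
  also have "\<dots> \<le> (\<Prod>j<m. 1 + norm z)"
  proof (intro prod_mono conjI norm_ge_zero)
    fix j
    show "norm (1 - z * q ^ j) \<le> 1 + norm z"
      using norm_triangle_ineq4[of 1 "z * q ^ j"] norm_mult_power_le[OF assms, of z j] by simp
  qed
  finally show ?thesis by simp
qed

lemma norm_qpoch_ge:
  assumes "0 \<le> d" "\<And>j. d \<le> norm (1 - z * q ^ j)"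
  shows "d ^ m \<le> norm (qpoch z q m)"
proof -
  have "d ^ m = (\<Prod>j<m. d)" by simp
  also have "\<dots> \<le> (\<Prod>j<m. norm (1 - z * q ^ j))"
    using assms by (intro prod_mono) auto
  also have "\<dots> = norm (qpoch z q m)"
    unfolding qpoch_def by (rule prod_norm)
  finally show ?thesis .
qed

lemma norm_qAppell1_term_le:
  fixes q a b b' c x y :: complex
  assumes q: "norm q < 1" and d: "0 < d" "\<And>j. d \<le> norm (1 - c * q ^ j)"
    and A: "norm a \<le> A" "norm b \<le> A" "norm b' \<le> A"
  shows "norm (qAppell1_term q a b b' c x y (m, n))
    \<le> ((1 + A)\<^sup>2 / ((1 - norm q) * d) * norm x) ^ m * ((1 + A)\<^sup>2 / ((1 - norm q) * d) * norm y) ^ n"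
proof -
  define B where "B = 1 + A"
  define D where "D = (1 - norm q) * d"
  have "0 \<le> A" using A(1) norm_ge_zero[of a] by linarith
  then have B: "1 \<le> B" by (simp add: B_def)
  have D: "0 < D" using q d by (simp add: D_def)
  have numerator: "norm (qpoch a q (m + n) * qpoch b q m * qpoch b' q n) \<le> (B\<^sup>2) ^ (m + n)"
  proof -
    have "norm (qpoch a q (m + n) * qpoch b q m * qpoch b' q n) \<le> B ^ (m + n) * B ^ m * B ^ n"
      unfolding norm_mult B_def using q A \<open>0 \<le> A\<close>
      by (intro mult_mono order_trans[OF norm_qpoch_le] power_mono) auto
    also have "\<dots> = (B\<^sup>2) ^ (m + n)"
      by (simp add: power2_eq_square power_add power_mult_distrib)
    finally show ?thesis .
  qed
  have denominator: "D ^ (m + n) \<le> norm (qpoch q q m * qpoch q q n * qpoch c q (m + n))"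
  proof -
    have "D ^ (m + n) = (1 - norm q) ^ m * (1 - norm q) ^ n * d ^ (m + n)"
      by (simp add: D_def power_mult_distrib power_add)
    also have "\<dots> \<le> norm (qpoch q q m) * norm (qpoch q q n) * norm (qpoch c q (m + n))"
      using q d norm_one_minus_mult_power_ge[of q q]
      by (intro mult_mono norm_qpoch_ge) auto
    finally show ?thesis by (simp add: norm_mult)
  qed
  have "norm (qAppell1_term q a b b' c x y (m, n))
      = norm (qpoch a q (m + n) * qpoch b q m * qpoch b' q n)
        / norm (qpoch q q m * qpoch q q n * qpoch c q (m + n)) * norm x ^ m * norm y ^ n"
    by (simp add: qAppell1_term_def norm_mult norm_divide norm_power)
  also have "\<dots> \<le> (B\<^sup>2) ^ (m + n) / D ^ (m + n) * norm x ^ m * norm y ^ n"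
    using numerator denominator D by (intro mult_right_mono frac_le) auto
  also have "\<dots> = (B\<^sup>2 / D * norm x) ^ m * (B\<^sup>2 / D * norm y) ^ n"
    by (simp add: power_add power_mult_distrib power_divide)
  finally show ?thesis by (simp add: B_def D_def)
qed

lemma summable_on_product_nonneg:
  fixes f g :: "'a \<Rightarrow> real"
  assumes "f summable_on A" "g summable_on B" "\<And>x. x \<in> A \<Longrightarrow> 0 \<le> f x" "\<And>y. y \<in> B \<Longrightarrow> 0 \<le> g y"
  shows "(\<lambda>(x, y). f x * g y) summable_on A \<times> B"
proof (rule summable_on_SigmaI[where g = "\<lambda>x. f x * infsum g B"])
  show "((\<lambda>y. case (x, y) of (x, y) \<Rightarrow> f x * g y) has_sum f x * infsum g B) B" for x
    using has_sum_cmult_right[OF has_sum_infsum[OF assms(2)]] by simp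
  show "(\<lambda>x. f x * infsum g B) summable_on A"
    by (rule summable_on_cmult_left[OF assms(1)])
qed (use assms in auto)

lemma geometric_summable_on:
  fixes r :: real
  assumes "0 \<le> r" "r < 1"
  shows "(\<lambda>n. r ^ n) summable_on UNIV"
  using assms by (simp add: summable_on_UNIV_nonneg_real_iff summable_geometric)

lemma qAppell1_term_summable:
  fixes q a b b' c x y :: complex
  assumes q: "norm q < 1" and d: "0 < d" "\<And>j. d \<le> norm (1 - c * q ^ j)"
    and A: "norm a \<le> A" "norm b \<le> A" "norm b' \<le> A"
    and x: "norm x * (1 + A)\<^sup>2 < (1 - norm q) * d" and y: "norm y * (1 + A)\<^sup>2 < (1 - norm q) * d"
  shows "qAppell1_term q a b b' c x y summable_on UNIV"
proof -
  define \<rho> where "\<rho> = (1 + A)\<^sup>2 / ((1 - norm q) * d)"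
  have D: "0 < (1 - norm q) * d" using q d by simp
  have \<rho>: "0 \<le> \<rho>" "\<rho> * norm x < 1" "\<rho> * norm y < 1"
    using D x y by (simp_all add: \<rho>_def field_simps)
  have "(\<lambda>(m, n). (\<rho> * norm x) ^ m * (\<rho> * norm y) ^ n) summable_on UNIV \<times> UNIV"
    using \<rho> by (intro summable_on_product_nonneg geometric_summable_on) auto
  then have "(\<lambda>(m, n). (\<rho> * norm x) ^ m * (\<rho> * norm y) ^ n) summable_on UNIV"
    by simp
  then have "(\<lambda>p. norm (qAppell1_term q a b b' c x y p)) summable_on UNIV"
  proof (rule summable_on_comparison_test[OF _ _ norm_ge_zero])
    fix p :: "nat \<times> nat"
    show "norm (qAppell1_term q a b b' c x y p) \<le> (case p of (m, n) \<Rightarrow> (\<rho> * norm x) ^ m * (\<rho> * norm y) ^ n)"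
      using norm_qAppell1_term_le[OF q d A] by (cases p) (simp add: \<rho>_def)
  qed
  then show ?thesis
    by (rule abs_summable_summable)
qed

section \<open>The contiguous relation\<close>

lemma has_sum_reindex_vanishing:
  assumes "inj h" and "\<And>p. p \<notin> range h \<Longrightarrow> f p = 0" and "((f \<circ> h) has_sum s) UNIV"
  shows "(f has_sum s) UNIV"
proof -
  have "(f has_sum s) (range h)"
    using has_sum_reindex[OF assms(1)] assms(3) by blast
  then show ?thesis
    by (rule has_sum_cong_neutral[THEN iffD1, rotated -1]) (use assms(2) in auto)
qed

lemma qpoch_mult_q: "qpoch (a * q) q N = qpoch a q N + a * (1 - q ^ N) * qpoch (a * q) q (N - 1)"
proof (cases N)
  case (Suc M)
  have "qpoch a q (Suc M) = (1 - a) * qpoch (a * q) q M"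
    by (rule qpoch_Suc_shift)
  then show ?thesis
    using Suc by (simp add: qpoch_Suc algebra_simps)
qed simp

text \<open>The next two series make up \<open>\<Phi>[aq; \<dots>] - \<Phi>[a; \<dots>]\<close>: they come from
  \<open>(aq;q)\<^sub>N - (a;q)\<^sub>N = a (1 - q\<^sup>N) (aq;q)\<^sub>N\<^sub>-\<^sub>1\<close> and \<open>1 - q\<^sup>m\<^sup>+\<^sup>n = (1 - q\<^sup>m) + q\<^sup>m (1 - q\<^sup>n)\<close>.\<close>

lemma has_sum_qAppell1_contiguous_x:
  fixes q a B B' C x y :: complex
  assumes q: "\<And>j. q ^ Suc j \<noteq> 1"
    and summable: "qAppell1_term q (a * q) (B * q) B' (C * q) x y summable_on UNIV"
  shows "((\<lambda>(m, n). a * (1 - q ^ m) * qpoch (a * q) q (m + n - 1) * qpoch B q m * qpoch B' q n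
      / (qpoch q q m * qpoch q q n * qpoch C q (m + n)) * x ^ m * y ^ n)
    has_sum a * x * (1 - B) / (1 - C) * qAppell1 q (a * q) (B * q) B' (C * q) x y) UNIV"
    (is "(?U has_sum _) _")
proof (rule has_sum_reindex_vanishing[where h = "\<lambda>(m, n). (Suc m, n)"])
  have "?U (Suc m, n) = a * x * (1 - B) / (1 - C) * qAppell1_term q (a * q) (B * q) B' (C * q) x y (m, n)"
    for m n
  proof -
    define u where "u = 1 - q * q ^ m"
    have "u \<noteq> 0" using q[of m] by (simp add: u_def)
    have "?U (Suc m, n) = a * u * qpoch (a * q) q (m + n) * ((1 - B) * qpoch (B * q) q m)
        * qpoch B' q n / (qpoch q q m * u * qpoch q q n * ((1 - C) * qpoch (C * q) q (m + n)))
        * (x * x ^ m) * y ^ n"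
      by (simp add: u_def qpoch_Suc_shift[of B] qpoch_Suc_shift[of C] qpoch_Suc[of q q])
    with \<open>u \<noteq> 0\<close> show ?thesis
      by (simp add: qAppell1_term_def mult_ac)
  qed
  then have "?U \<circ> (\<lambda>(m, n). (Suc m, n))
      = (\<lambda>p. a * x * (1 - B) / (1 - C) * qAppell1_term q (a * q) (B * q) B' (C * q) x y p)"
    by (auto simp: fun_eq_iff)
  then show "((?U \<circ> (\<lambda>(m, n). (Suc m, n))) has_sum
      a * x * (1 - B) / (1 - C) * qAppell1 q (a * q) (B * q) B' (C * q) x y) UNIV"
    unfolding qAppell1_eq_infsum by (simp only: has_sum_cmult_right[OF has_sum_infsum[OF summable]])
  show "?U p = 0" if "p \<notin> range (\<lambda>(m, n). (Suc m, n))" for p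
    using that by (cases p; cases "fst p") auto
qed (auto simp: inj_def)

lemma has_sum_qAppell1_contiguous_y:
  fixes q a B B' C x y :: complex
  assumes q: "\<And>j. q ^ Suc j \<noteq> 1"
    and summable: "qAppell1_term q (a * q) B (B' * q) (C * q) (x * q) y summable_on UNIV"
  shows "((\<lambda>(m, n). a * q ^ m * (1 - q ^ n) * qpoch (a * q) q (m + n - 1) * qpoch B q m * qpoch B' q n
      / (qpoch q q m * qpoch q q n * qpoch C q (m + n)) * x ^ m * y ^ n)
    has_sum a * y * (1 - B') / (1 - C) * qAppell1 q (a * q) B (B' * q) (C * q) (x * q) y) UNIV"
    (is "(?V has_sum _) _")
proof (rule has_sum_reindex_vanishing[where h = "\<lambda>(m, n). (m, Suc n)"])
  have "?V (m, Suc n) = a * y * (1 - B') / (1 - C) * qAppell1_term q (a * q) B (B' * q) (C * q) (x * q) y (m, n)"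
    for m n
  proof -
    define u where "u = 1 - q * q ^ n"
    have "u \<noteq> 0" using q[of n] by (simp add: u_def)
    have "?V (m, Suc n) = a * q ^ m * u * qpoch (a * q) q (m + n) * qpoch B q m
        * ((1 - B') * qpoch (B' * q) q n) / (qpoch q q m * (qpoch q q n * u)
        * ((1 - C) * qpoch (C * q) q (m + n))) * x ^ m * (y * y ^ n)"
      by (simp add: u_def qpoch_Suc_shift[of B'] qpoch_Suc_shift[of C] qpoch_Suc[of q q])
    with \<open>u \<noteq> 0\<close> show ?thesis
      by (simp add: qAppell1_term_def power_mult_distrib mult_ac)
  qed
  then have "?V \<circ> (\<lambda>(m, n). (m, Suc n))
      = (\<lambda>p. a * y * (1 - B') / (1 - C) * qAppell1_term q (a * q) B (B' * q) (C * q) (x * q) y p)"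
    by (auto simp: fun_eq_iff)
  then show "((?V \<circ> (\<lambda>(m, n). (m, Suc n))) has_sum
      a * y * (1 - B') / (1 - C) * qAppell1 q (a * q) B (B' * q) (C * q) (x * q) y) UNIV"
    unfolding qAppell1_eq_infsum by (simp only: has_sum_cmult_right[OF has_sum_infsum[OF summable]])
  show "?V p = 0" if "p \<notin> range (\<lambda>(m, n). (m, Suc n))" for p
    using that by (cases p; cases "snd p") auto
qed (auto simp: inj_def)

lemma qAppell1_contiguous:
  fixes q a B B' C x y :: complex
  assumes q: "\<And>j. q ^ Suc j \<noteq> 1"
    and summable0: "qAppell1_term q a B B' C x y summable_on UNIV"
    and summable1: "qAppell1_term q (a * q) (B * q) B' (C * q) x y summable_on UNIV"
    and summable2: "qAppell1_term q (a * q) B (B' * q) (C * q) (x * q) y summable_on UNIV"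
  shows "qAppell1 q (a * q) B B' C x y = qAppell1 q a B B' C x y
    + a * x * (1 - B) / (1 - C) * qAppell1 q (a * q) (B * q) B' (C * q) x y
    + a * y * (1 - B') / (1 - C) * qAppell1 q (a * q) B (B' * q) (C * q) (x * q) y"
proof -
  define U where "U = (\<lambda>(m, n). a * (1 - q ^ m) * qpoch (a * q) q (m + n - 1) * qpoch B q m * qpoch B' q n
      / (qpoch q q m * qpoch q q n * qpoch C q (m + n)) * x ^ m * y ^ n)"
  define V where "V = (\<lambda>(m, n). a * q ^ m * (1 - q ^ n) * qpoch (a * q) q (m + n - 1) * qpoch B q m * qpoch B' q n
      / (qpoch q q m * qpoch q q n * qpoch C q (m + n)) * x ^ m * y ^ n)"
  have "qAppell1_term q (a * q) B B' C x y p = qAppell1_term q a B B' C x y p + U p + V p" for p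
  proof (cases p)
    case (Pair m n)
    have "qpoch (a * q) q (m + n) = qpoch a q (m + n)
        + (a * (1 - q ^ m) * qpoch (a * q) q (m + n - 1) + a * q ^ m * (1 - q ^ n) * qpoch (a * q) q (m + n - 1))"
      using qpoch_mult_q[of a q "m + n"] by (simp add: algebra_simps power_add)
    then show ?thesis
      unfolding Pair U_def V_def qAppell1_term_def
      by (simp only: prod.case distrib_right add_divide_distrib add.assoc)
  qed
  then have "qAppell1_term q (a * q) B B' C x y = (\<lambda>p. qAppell1_term q a B B' C x y p + U p + V p)"
    by blast
  moreover have "((\<lambda>p. qAppell1_term q a B B' C x y p + U p + V p) has_sum qAppell1 q a B B' C x y
      + a * x * (1 - B) / (1 - C) * qAppell1 q (a * q) (B * q) B' (C * q) x y
      + a * y * (1 - B') / (1 - C) * qAppell1 q (a * q) B (B' * q) (C * q) (x * q) y) UNIV"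
    using summable0 has_sum_qAppell1_contiguous_x[OF q summable1] has_sum_qAppell1_contiguous_y[OF q summable2]
    unfolding U_def V_def qAppell1_eq_infsum by (intro has_sum_add) auto
  ultimately show ?thesis
    by (simp add: qAppell1_eq_infsum infsumI)
qed

section \<open>The expansions\<close>

definition qAppell1_shifted ::
  "complex \<Rightarrow> complex \<Rightarrow> complex \<Rightarrow> complex \<Rightarrow> complex \<Rightarrow> complex \<Rightarrow> complex \<Rightarrow> nat \<Rightarrow> nat \<Rightarrow> complex"
where
  "qAppell1_shifted q \<alpha> b b' c x y i j = qpoch b q i * qpoch b' q j / qpoch c q (i + j) * x ^ i * y ^ j
     * qAppell1 q \<alpha> (b * q ^ i) (b' * q ^ j) (c * q ^ (i + j)) (x * q ^ j) y"

lemma qAppell1_shifted_recurrence: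
  fixes q \<alpha> b b' c x y :: complex
  assumes q: "\<And>j. q ^ Suc j \<noteq> 1" and c: "\<And>j. c * q ^ j \<noteq> 1"
    and summable: "\<And>\<beta> i j. \<beta> \<in> {\<alpha>, \<alpha> * q} \<Longrightarrow>
      qAppell1_term q \<beta> (b * q ^ i) (b' * q ^ j) (c * q ^ (i + j)) (x * q ^ j) y summable_on UNIV"
  shows "qAppell1_shifted q (\<alpha> * q) b b' c x y
    = qAppell1_shifted q \<alpha> b b' c x y + scale_fun \<alpha> (qshift q (qAppell1_shifted q (\<alpha> * q) b b' c x y))"
proof (intro ext)
  fix i j
  define u where "u = 1 - c * q ^ (i + j)"
  define P where "P = qpoch b q i * qpoch b' q j / qpoch c q (i + j) * x ^ i * y ^ j"
  have nz: "qpoch c q (i + j) \<noteq> 0" "u \<noteq> 0"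
    using c[of "i + j"] qpoch_nonzero[of c q, OF c] by (auto simp: u_def)
  have shift_i: "qpoch b q (Suc i) * qpoch b' q j / qpoch c q (Suc i + j) * x ^ Suc i * y ^ j
      = P * (x * (1 - b * q ^ i) / u)"
    using nz by (simp add: P_def u_def qpoch_Suc field_simps)
  have shift_j: "qpoch b q i * qpoch b' q (Suc j) / qpoch c q (i + Suc j) * x ^ i * y ^ Suc j
      = P * (y * (1 - b' * q ^ j) / u)"
    using nz by (simp add: P_def u_def qpoch_Suc field_simps)
  have params: "b * q ^ i * q = b * q ^ Suc i" "b' * q ^ j * q = b' * q ^ Suc j"
    "c * q ^ (i + j) * q = c * q ^ Suc (i + j)"
    "x * q ^ j * q = x * q ^ Suc j"
    by (simp_all add: mult.assoc)
  have "qAppell1_term q \<alpha> (b * q ^ i) (b' * q ^ j) (c * q ^ (i + j)) (x * q ^ j) y summable_on UNIV"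
    "qAppell1_term q (\<alpha> * q) (b * q ^ i * q) (b' * q ^ j) (c * q ^ (i + j) * q) (x * q ^ j) y summable_on UNIV"
    "qAppell1_term q (\<alpha> * q) (b * q ^ i) (b' * q ^ j * q) (c * q ^ (i + j) * q) (x * q ^ j * q) y summable_on UNIV"
    using summable[of \<alpha> i j] summable[of "\<alpha> * q" "Suc i" j] summable[of "\<alpha> * q" i "Suc j"]
    by (simp_all add: mult_ac)
  note contiguous = qAppell1_contiguous[OF q this, unfolded params u_def[symmetric]]
  show "qAppell1_shifted q (\<alpha> * q) b b' c x y i j
      = (qAppell1_shifted q \<alpha> b b' c x y + scale_fun \<alpha> (qshift q (qAppell1_shifted q (\<alpha> * q) b b' c x y))) i j"
    unfolding qAppell1_shifted_def qshift_def scale_fun_def plus_fun_def shift_i shift_j P_def[symmetric] contiguous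
    using nz by (simp add: field_simps)
qed

lemma qshift_funpow_qAppell1_shifted:
  assumes "\<And>j. q ^ Suc j \<noteq> 1"
  shows "(qshift q ^^ k) (qAppell1_shifted q \<alpha> b b' c x y) 0 0
    = (\<Sum>i\<le>k. qbinom q k i * (qpoch b q (k - i) * qpoch b' q i / qpoch c q k) * x ^ (k - i) * y ^ i
        * qAppell1 q \<alpha> (b * q ^ (k - i)) (b' * q ^ i) (c * q ^ k) (x * q ^ i) y)"
  unfolding qshift_funpow[OF assms]
  by (intro sum.cong refl) (auto simp: qbinomial_def qAppell1_shifted_def)

lemma qAppell1_shifted_geometric_recurrence:
  fixes q a b b' c x y :: complex
  assumes q: "norm q < 1" and c: "\<And>j. c * q ^ j \<noteq> 1"
    and summable: "\<And>\<alpha> i j. norm \<alpha> \<le> norm a \<Longrightarrow>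
      qAppell1_term q \<alpha> (b * q ^ i) (b' * q ^ j) (c * q ^ (i + j)) (x * q ^ j) y summable_on UNIV"
  shows "qAppell1_shifted q (a * q ^ Suc k) b b' c x y = qAppell1_shifted q (a * q ^ k) b b' c x y
    + scale_fun (a * q ^ k) (qshift q (qAppell1_shifted q (a * q ^ Suc k) b b' c x y))"
proof -
  have norms: "norm (a * q ^ Suc k) \<le> norm a" "norm (a * q ^ k) \<le> norm a"
    using q norm_mult_power_le[of q a "Suc k"] norm_mult_power_le[of q a k] by simp_all
  show ?thesis
    unfolding power_Suc2 mult.assoc[symmetric]
    by (intro qAppell1_shifted_recurrence[OF power_Suc_neq_one[OF q] c] summable)
       (use norms in \<open>auto simp: mult_ac\<close>)
qed

lemma qAppell1_expansion_up:
  fixes q a b b' c x y :: complex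
  assumes q: "norm q < 1" and c: "\<And>j. c * q ^ j \<noteq> 1"
    and summable: "\<And>\<alpha> i j. norm \<alpha> \<le> norm a \<Longrightarrow>
      qAppell1_term q \<alpha> (b * q ^ i) (b' * q ^ j) (c * q ^ (i + j)) (x * q ^ j) y summable_on UNIV"
  shows "qAppell1 q (a * q ^ n) b b' c x y =
    (\<Sum>k\<le>n. \<Sum>i\<le>k. qbinom q n k * qbinom q k i
       * (qpoch b q (k - i) * qpoch b' q i / qpoch c q k)
       * q ^ (2 * (k choose 2)) * a ^ k * x ^ (k - i) * y ^ i
       * qAppell1 q (a * q ^ k) (b * q ^ (k - i)) (b' * q ^ i) (c * q ^ k) (x * q ^ i) y)"
proof -
  have qq: "\<And>j. q ^ Suc j \<noteq> 1"
    using power_Suc_neq_one[OF q] .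
  define R where "R k = qAppell1_shifted q (a * q ^ k) b b' c x y" for k
  have "R (Suc k) = R k + scale_fun (a * q ^ k) (qshift q (R (Suc k)))" for k
    unfolding R_def by (rule qAppell1_shifted_geometric_recurrence[OF q c summable])
  then have "R n = (\<Sum>k\<le>n. scale_fun (qbinomial q n k * q ^ (2 * (k choose 2)) * a ^ k) ((qshift q ^^ k) (R k)))"
    by (rule qrecurrence_expand_last[OF module_hom_qshift qq])
  then have "R n 0 0 = (\<Sum>k\<le>n. qbinomial q n k * q ^ (2 * (k choose 2)) * a ^ k * (qshift q ^^ k) (R k) 0 0)"
    by (simp add: sum_fun_apply scale_fun_def)
  also have "\<dots> = (\<Sum>k\<le>n. \<Sum>i\<le>k. qbinom q n k * qbinom q k i
       * (qpoch b q (k - i) * qpoch b' q i / qpoch c q k)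
       * q ^ (2 * (k choose 2)) * a ^ k * x ^ (k - i) * y ^ i
       * qAppell1 q (a * q ^ k) (b * q ^ (k - i)) (b' * q ^ i) (c * q ^ k) (x * q ^ i) y)"
    by (intro sum.cong refl)
       (simp add: R_def qshift_funpow_qAppell1_shifted[OF qq] qbinomial_def sum_distrib_left mult_ac)
  finally show ?thesis
    by (simp add: R_def qAppell1_shifted_def)
qed

lemma power_choose_two_mult_powi:
  fixes q a :: complex
  assumes "q \<noteq> 0"
  shows "q ^ (k choose 2) * (- (a * q powi (- int n))) ^ k = q powi (int (k choose 2) - int n * int k) * (- a) ^ k"
proof -
  have "- (a * q powi (- int n)) = (- a) / q ^ n"
    by (simp add: power_int_minus divide_inverse)
  then have "(- (a * q powi (- int n))) ^ k = (- a) ^ k / q ^ (n * k)"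
    by (simp only: power_divide power_mult)
  moreover have "q powi (int (k choose 2) - int n * int k) = q ^ (k choose 2) / q ^ (n * k)"
    using assms by (simp add: power_int_diff flip: of_nat_mult)
  ultimately show ?thesis by simp
qed

lemma qAppell1_expansion_down:
  fixes q a b b' c x y :: complex
  assumes q: "norm q < 1" "q \<noteq> 0" and c: "\<And>j. c * q ^ j \<noteq> 1"
    and summable: "\<And>\<alpha> i j. norm \<alpha> \<le> norm (a * q powi (- int n)) \<Longrightarrow>
      qAppell1_term q \<alpha> (b * q ^ i) (b' * q ^ j) (c * q ^ (i + j)) (x * q ^ j) y summable_on UNIV"
  shows "qAppell1 q (a * q powi (- int n)) b b' c x y =
    (\<Sum>k\<le>n. \<Sum>i\<le>k. qbinom q n k * qbinom q k i
       * (qpoch b q (k - i) * qpoch b' q i / qpoch c q k)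
       * q powi (int (k choose 2) - int n * int k) * (- a) ^ k * x ^ (k - i) * y ^ i
       * qAppell1 q a (b * q ^ (k - i)) (b' * q ^ i) (c * q ^ k) (x * q ^ i) y)"
proof -
  have qq: "\<And>j. q ^ Suc j \<noteq> 1"
    using power_Suc_neq_one[OF q(1)] .
  define a0 where "a0 = a * q powi (- int n)"
  have a0: "a0 * q ^ n = a"
    using q(2) by (simp add: a0_def power_int_minus)
  have coefficient: "q ^ (k choose 2) * (- a0) ^ k = q powi (int (k choose 2) - int n * int k) * (- a) ^ k" for k
    unfolding a0_def by (rule power_choose_two_mult_powi[OF q(2)])
  define R where "R k = qAppell1_shifted q (a0 * q ^ k) b b' c x y" for k
  have "R (Suc k) = R k + scale_fun (a0 * q ^ k) (qshift q (R (Suc k)))" for k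
    unfolding R_def by (rule qAppell1_shifted_geometric_recurrence[OF q(1) c summable[folded a0_def]])
  then have "R 0 = (\<Sum>k\<le>n. scale_fun (qbinomial q n k * q ^ (k choose 2) * (- a0) ^ k) ((qshift q ^^ k) (R n)))"
    by (rule qrecurrence_expand_first[OF module_hom_qshift qq])
  then have "R 0 0 0 = (\<Sum>k\<le>n. qbinomial q n k * (q ^ (k choose 2) * (- a0) ^ k) * (qshift q ^^ k) (R n) 0 0)"
    by (simp add: sum_fun_apply scale_fun_def mult.assoc)
  also have "\<dots> = (\<Sum>k\<le>n. \<Sum>i\<le>k. qbinom q n k * qbinom q k i
       * (qpoch b q (k - i) * qpoch b' q i / qpoch c q k)
       * q powi (int (k choose 2) - int n * int k) * (- a) ^ k * x ^ (k - i) * y ^ i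
       * qAppell1 q a (b * q ^ (k - i)) (b' * q ^ i) (c * q ^ k) (x * q ^ i) y)"
    unfolding coefficient
    by (intro sum.cong refl)
       (simp add: R_def a0 qshift_funpow_qAppell1_shifted[OF qq] qbinomial_def sum_distrib_left mult_ac)
  finally show ?thesis
    by (simp add: R_def a0_def qAppell1_shifted_def)
qed

lemma one_minus_geometric_bounded_below:
  fixes q c :: complex
  assumes q: "norm q < 1" and c: "\<And>j. c * q ^ j \<noteq> 1"
  obtains d where "0 < d" "\<And>j. d \<le> norm (1 - c * q ^ j)"
proof -
  have "(\<lambda>j. c * q ^ j) \<longlonglongrightarrow> 0"
    by (intro tendsto_mult_right_zero LIMSEQ_power_zero q)
  then obtain J where J: "\<And>j. J \<le> j \<Longrightarrow> norm (c * q ^ j) < 1 / 2"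
    using LIMSEQ_D[of _ 0 "1 / 2"] by auto
  define d where "d = Min (insert (1 / 2) ((\<lambda>j. norm (1 - c * q ^ j)) ` {..<J}))"
  show ?thesis
  proof
    show "0 < d"
      using c by (auto simp: d_def)
    show "d \<le> norm (1 - c * q ^ j)" for j
    proof (cases "j < J")
      case False
      then have "1 / 2 \<le> norm (1 - c * q ^ j)"
        using J[of j] norm_triangle_ineq2[of 1 "c * q ^ j"] by simp
      moreover have "d \<le> 1 / 2"
        unfolding d_def by (rule Min_le) auto
      ultimately show ?thesis by linarith
    qed (auto simp: d_def)
  qed
qed

lemma qAppell1_shifted_term_summable:
  fixes q \<alpha> b b' c x y :: complex
  assumes q: "norm q < 1" and d: "0 < d" "\<And>j. d \<le> norm (1 - c * q ^ j)"
    and A: "norm \<alpha> \<le> A" "norm b \<le> A" "norm b' \<le> A"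
    and x: "norm x * (1 + A)\<^sup>2 < (1 - norm q) * d" and y: "norm y * (1 + A)\<^sup>2 < (1 - norm q) * d"
  shows "qAppell1_term q \<alpha> (b * q ^ i) (b' * q ^ j) (c * q ^ (i + j)) (x * q ^ j) y summable_on UNIV"
proof (rule qAppell1_term_summable[OF q d(1) _ A(1) _ _ _ y])
  show "d \<le> norm (1 - c * q ^ (i + j) * q ^ l)" for l
    using d(2)[of "i + j + l"] by (simp add: power_add mult.assoc)
  show "norm (b * q ^ i) \<le> A" "norm (b' * q ^ j) \<le> A"
    using q A norm_mult_power_le[of q] by (auto intro: order_trans)
  show "norm (x * q ^ j) * (1 + A)\<^sup>2 < (1 - norm q) * d"
  proof -
    have "norm (x * q ^ j) * (1 + A)\<^sup>2 \<le> norm x * (1 + A)\<^sup>2"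
      using q norm_mult_power_le[of q x j] by (intro mult_right_mono) auto
    then show ?thesis using x by linarith
  qed
qed

lemma norm_le_norm_mult_power_int_minus:
  fixes q a :: complex
  assumes "norm q < 1" "q \<noteq> 0"
  shows "norm a \<le> norm (a * q powi (- int n))"
proof -
  have "norm a = norm (a * q powi (- int n) * q ^ n)"
    using assms(2) by (simp add: power_int_minus mult.assoc)
  also have "\<dots> \<le> norm (a * q powi (- int n))"
    using assms(1) by (intro norm_mult_power_le) simp
  finally show ?thesis .
qed

lemma eventually_nhds_zero_norm_mult_less:
  fixes K r :: real
  assumes "0 < r"
  shows "\<forall>\<^sub>F (x, y) in nhds (0 :: 'a::real_normed_vector, 0 :: 'b::real_normed_vector).
    norm x * K < r \<and> norm y * K < r"
proof -
  have "((\<lambda>p. norm (fst p) * K) \<longlongrightarrow> 0) (nhds (0 :: 'a, 0 :: 'b))"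
    "((\<lambda>p. norm (snd p) * K) \<longlongrightarrow> 0) (nhds (0 :: 'a, 0 :: 'b))"
    using filterlim_ident[of "nhds (0 :: 'a, 0 :: 'b)"] by (auto intro!: tendsto_eq_intros)
  then show ?thesis
    unfolding case_prod_unfold using assms by (intro eventually_conj order_tendstoD(2))
qed

theorem theorem2:
  fixes q a b b' c :: complex and n :: nat
  assumes "0 < norm q" and "norm q < 1"
    and "\<And>j::nat. c * q ^ j \<noteq> 1"
  shows "eventually (\<lambda>(x, y).
           qAppell1 q (a * q ^ n) b b' c x y =
           (\<Sum>k\<le>n. \<Sum>i\<le>k. qbinom q n k * qbinom q k i
              * (qpoch b q (k - i) * qpoch b' q i / qpoch c q k)
              * q ^ (2 * (k choose 2)) * a ^ k * x ^ (k - i) * y ^ i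
              * qAppell1 q (a * q ^ k) (b * q ^ (k - i)) (b' * q ^ i) (c * q ^ k) (x * q ^ i) y))
         (nhds (0, 0))
     \<and> eventually (\<lambda>(x, y).
           qAppell1 q (a * q powi (- int n)) b b' c x y =
           (\<Sum>k\<le>n. \<Sum>i\<le>k. qbinom q n k * qbinom q k i
              * (qpoch b q (k - i) * qpoch b' q i / qpoch c q k)
              * q powi (int (k choose 2) - int n * int k) * (- a) ^ k * x ^ (k - i) * y ^ i
              * qAppell1 q a (b * q ^ (k - i)) (b' * q ^ i) (c * q ^ k) (x * q ^ i) y))
         (nhds (0, 0))"
proof -
  have q: "norm q < 1" "q \<noteq> 0"
    using assms(1,2) by auto
  obtain d where d: "0 < d" "\<And>j. d \<le> norm (1 - c * q ^ j)"
    using one_minus_geometric_bounded_below[OF q(1) assms(3)] by blast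
  define A where "A = max (norm (a * q powi (- int n))) (max (norm b) (norm b'))"
  have a: "norm a \<le> A"
    using norm_le_norm_mult_power_int_minus[OF q, of a n] by (simp add: A_def)
  have "\<forall>\<^sub>F (x, y) in nhds (0 :: complex, 0 :: complex).
      norm x * (1 + A)\<^sup>2 < (1 - norm q) * d \<and> norm y * (1 + A)\<^sup>2 < (1 - norm q) * d"
    using q(1) d(1) by (intro eventually_nhds_zero_norm_mult_less) simp
  then show ?thesis
    by (intro conjI; elim eventually_mono; clarify;
        intro qAppell1_expansion_up[OF q(1) assms(3)] qAppell1_expansion_down[OF q assms(3)]
          qAppell1_shifted_term_summable[OF q(1) d])
       (use a in \<open>auto simp: A_def\<close>)
qed

end
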